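(* For every infinite cardinal $\theta$ the following are equivalent: (1) $\theta<\mathfrak{r}$. (2) For every singular cardinal $\kappa$ of countable cofinality and every set $A\subseteq[\kappa]^\omega$ consisting of cofinal subsets of $\kappa$ with $|A|\le\theta$, there is $E\subseteq\kappa$ such that for every $a\in A$, both $a\cap E$ and $a\setminus E$ are infinite. (3) There is a singular cardinal $\kappa$ of countable cofinality such that for every set $A\subseteq[\kappa]^\omega$ consisting of cofinal subsets of $\kappa$ with $|A|\le\theta$, there is $E\subseteq\kappa$ such that for every $a\in A$, both $a\cap E$ and $a\setminus E$ are infinite.
   Context: The reaping number $\mathfrak{r}$ is the least cardinality of a set $A\subseteq[\omega]^\omega$ such that for every $b\in[\omega]^\omega$ there is $a\in A$ with $a\setminus b$ or $a\cap b$ finite. *)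

theory Defs
  imports Main "HOL-Library.Countable_Set"
begin

definition reaping_family :: "nat set set \<Rightarrow> bool" where
  "reaping_family A \<longleftrightarrow> (\<forall>a\<in>A. infinite a) \<and>
     (\<forall>b. infinite b \<longrightarrow> (\<exists>a\<in>A. finite (a - b) \<or> finite (a \<inter> b)))"

text \<open>theta < r : theta is strictly below the cardinality of every reaping family
  (the reaping number being the least such cardinality).  The cardinal theta is
  given as the cardinality of a set T.\<close>
definition below_reaping :: "'t set \<Rightarrow> bool" where
  "below_reaping T \<longleftrightarrow> (\<forall>A. reaping_family A \<longrightarrow> (card_of T, card_of A) \<in> ordLess)"

text \<open>A cardinal kappa is represented by a set K with a cardinal well-order r on it.\<close>
definition cofinal_in :: "'k rel \<Rightarrow> 'k set \<Rightarrow> 'k set \<Rightarrow> bool" where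
  "cofinal_in r K a \<longleftrightarrow> a \<subseteq> K \<and> (\<forall>x\<in>K. \<exists>y\<in>a. (x, y) \<in> r)"

definition singular_cof_omega :: "'k set \<Rightarrow> 'k rel \<Rightarrow> bool" where
  "singular_cof_omega K r \<longleftrightarrow> card_order_on K r \<and> uncountable K \<and>
     (\<exists>c. countable c \<and> cofinal_in r K c)"

definition splits_small_cofinal :: "'t set \<Rightarrow> 'k set \<Rightarrow> 'k rel \<Rightarrow> bool" where
  "splits_small_cofinal T K r \<longleftrightarrow>
     (\<forall>A. (\<forall>a\<in>A. a \<subseteq> K \<and> countable a \<and> infinite a \<and> cofinal_in r K a)
          \<longrightarrow> (card_of A, card_of T) \<in> ordLeq
          \<longrightarrow> (\<exists>E\<subseteq>K. \<forall>a\<in>A. infinite (a \<inter> E) \<and> infinite (a - E)))"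

end

theory Submission
  imports Defs
begin

text \<open>A singular cardinal \<open>\<kappa>\<close> of countable cofinality carries a strictly increasing cofinal
  sequence \<open>d\<^sub>0 < d\<^sub>1 < \<dots>\<close>. The sequence transports infinite subsets of \<open>\<omega>\<close> to countable
  cofinal subsets of \<open>\<kappa>\<close>, and the index map \<open>x \<mapsto> min {n. x \<le> d\<^sub>n}\<close> transports cofinal
  subsets of \<open>\<kappa>\<close> back to infinite subsets of \<open>\<omega>\<close>. Both maps pull splitting sets back to
  splitting sets, so a family of at most \<open>\<theta>\<close> cofinal sets can be split exactly when every family
  of at most \<open>\<theta>\<close> infinite subsets of \<open>\<omega>\<close> can, i.e. exactly when \<open>\<theta>\<close> is below the reaping number.\<close>

lemma not_reaping_family_iff_split:
  assumes "\<forall>s\<in>S. infinite s"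
  shows "\<not> reaping_family S \<longleftrightarrow> (\<exists>b. \<forall>s\<in>S. infinite (s \<inter> b) \<and> infinite (s - b))"
proof
  assume "\<not> reaping_family S"
  then show "\<exists>b. \<forall>s\<in>S. infinite (s \<inter> b) \<and> infinite (s - b)"
    using assms unfolding reaping_family_def by blast
next
  assume "\<exists>b. \<forall>s\<in>S. infinite (s \<inter> b) \<and> infinite (s - b)"
  then obtain b where b: "\<forall>s\<in>S. infinite (s \<inter> b) \<and> infinite (s - b)" by blast
  show "\<not> reaping_family S"
  proof (cases "S = {}")
    case True
    then show ?thesis unfolding reaping_family_def by blast
  next
    case False
    then obtain s where "s \<in> S" by blast
    then have "infinite b" using b finite_Int by blast
    then show ?thesis using b unfolding reaping_family_def by blast
  qed
qed

lemma below_reaping_iff: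
  "below_reaping T \<longleftrightarrow> (\<forall>S. (card_of S, card_of T) \<in> ordLeq \<longrightarrow> \<not> reaping_family S)"
  unfolding below_reaping_def
  using not_ordLess_iff_ordLeq[OF card_of_Well_order card_of_Well_order] not_ordLess_ordLeq
  by blast

lemma split_image_imp_split_vimage:
  assumes "infinite (f ` a \<inter> b)" and "infinite (f ` a - b)"
  shows "infinite (a \<inter> f -` b) \<and> infinite (a - f -` b)"
proof -
  have "f ` a \<inter> b \<subseteq> f ` (a \<inter> f -` b)" and "f ` a - b \<subseteq> f ` (a - f -` b)" by blast+
  then show ?thesis using assms by (meson finite_imageI finite_subset)
qed

lemma partial_order_on_chain_strict:
  assumes "partial_order_on K r" and step: "\<And>n. (d n, d (Suc n)) \<in> r \<and> d n \<noteq> d (Suc n)"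
  shows "n < m \<Longrightarrow> (d n, d m) \<in> r \<and> d n \<noteq> d m"
proof (induction m)
  case (Suc m)
  have "trans r" "antisym r" using assms(1) unfolding partial_order_on_def preorder_on_def by auto
  show ?case
  proof (cases "n = m")
    case False
    then have "(d n, d m) \<in> r" "d n \<noteq> d m" using Suc by auto
    then have "(d n, d (Suc m)) \<in> r" using step[of m] \<open>trans r\<close> by (meson transD)
    moreover have "d n \<noteq> d (Suc m)"
      using \<open>(d n, d m) \<in> r\<close> \<open>d n \<noteq> d m\<close> step[of m] \<open>antisym r\<close> by (metis antisymD)
    ultimately show ?thesis by blast
  qed (use step in simp)
qed simp

locale cofinal_omega_chain =
  fixes K :: "'k set" and r :: "'k rel" and d :: "nat \<Rightarrow> 'k"
  assumes partial_order: "partial_order_on K r"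
    and chain_strict: "n < m \<Longrightarrow> (d n, d m) \<in> r \<and> d n \<noteq> d m"
    and chain_cofinal: "x \<in> K \<Longrightarrow> \<exists>n. (x, d n) \<in> r"
begin

lemma rel_subset: "r \<subseteq> K \<times> K" and refl: "x \<in> K \<Longrightarrow> (x, x) \<in> r"
  and trans: "(x, y) \<in> r \<Longrightarrow> (y, z) \<in> r \<Longrightarrow> (x, z) \<in> r"
  and antisym: "(x, y) \<in> r \<Longrightarrow> (y, x) \<in> r \<Longrightarrow> x = y"
  using partial_order
  unfolding partial_order_on_def preorder_on_def refl_on_def trans_def antisym_def by blast+

lemma chain_in: "d n \<in> K"
  using chain_strict[of n "Suc n"] rel_subset by blast

lemma chain_mono: "n \<le> m \<Longrightarrow> (d n, d m) \<in> r"
  using chain_strict refl chain_in by (cases "n = m") auto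

lemma inj_chain: "inj d"
  by (rule injI) (metis chain_strict linorder_neqE_nat)

definition chain_index :: "'k \<Rightarrow> nat" where
  "chain_index x = (LEAST n. (x, d n) \<in> r)"

lemma below_chain_index: "x \<in> K \<Longrightarrow> (x, d (chain_index x)) \<in> r"
  unfolding chain_index_def using chain_cofinal by (rule LeastI_ex)

lemma infinite_chain_index_image:
  assumes "cofinal_in r K a"
  shows "infinite (chain_index ` a)"
proof
  assume "finite (chain_index ` a)"
  then obtain N where N: "\<forall>n\<in>chain_index ` a. n \<le> N"
    using finite_nat_set_iff_bounded_le by blast
  obtain y where y: "y \<in> a" "(d (Suc N), y) \<in> r"
    using assms chain_in unfolding cofinal_in_def by blast
  have "(y, d (chain_index y)) \<in> r"
    using y(1) assms below_chain_index unfolding cofinal_in_def by blast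
  moreover have "(d (chain_index y), d N) \<in> r" using N y(1) chain_mono by blast
  ultimately have "(d (Suc N), d N) \<in> r" using y(2) trans by blast
  then show False using chain_strict[of N "Suc N"] antisym by blast
qed

lemma cofinal_chain_image:
  assumes "infinite s"
  shows "cofinal_in r K (d ` s)"
  unfolding cofinal_in_def
proof (intro conjI ballI)
  show "d ` s \<subseteq> K" using chain_in by blast
next
  fix x assume "x \<in> K"
  then obtain n where n: "(x, d n) \<in> r" using chain_cofinal by blast
  obtain m where "m \<in> s" "n \<le> m" using assms infinite_nat_iff_unbounded_le by blast
  then show "\<exists>y\<in>d ` s. (x, y) \<in> r" using n chain_mono trans by blast
qed

lemma splits_small_cofinal_if_below_reaping:
  assumes "below_reaping T"
  shows "splits_small_cofinal T K r"
  unfolding splits_small_cofinal_def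
proof (intro allI impI)
  fix A :: "'k set set"
  assume A: "\<forall>a\<in>A. a \<subseteq> K \<and> countable a \<and> infinite a \<and> cofinal_in r K a"
    and card_A: "(card_of A, card_of T) \<in> ordLeq"
  define S where "S = (\<lambda>a. chain_index ` a) ` A"
  have "(card_of S, card_of T) \<in> ordLeq"
    unfolding S_def using card_of_image card_A ordLeq_transitive by blast
  moreover have "\<forall>s\<in>S. infinite s"
    unfolding S_def using A infinite_chain_index_image by blast
  moreover have "\<not> reaping_family S" using assms calculation(1) below_reaping_iff by blast
  ultimately obtain b where b: "\<forall>s\<in>S. infinite (s \<inter> b) \<and> infinite (s - b)"
    using not_reaping_family_iff_split by blast
  define E where "E = K \<inter> chain_index -` b"
  have "infinite (a \<inter> E) \<and> infinite (a - E)" if "a \<in> A" for a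
  proof -
    have "a \<inter> E = a \<inter> chain_index -` b" "a - E = a - chain_index -` b"
      using that A unfolding E_def by blast+
    moreover have "chain_index ` a \<in> S" using that unfolding S_def by blast
    ultimately show ?thesis using b split_image_imp_split_vimage by metis
  qed
  then show "\<exists>E\<subseteq>K. \<forall>a\<in>A. infinite (a \<inter> E) \<and> infinite (a - E)"
    unfolding E_def by blast
qed

lemma below_reaping_if_splits_small_cofinal:
  assumes "splits_small_cofinal T K r"
  shows "below_reaping T"
  unfolding below_reaping_iff
proof (intro allI impI)
  fix S :: "nat set set"
  assume card_S: "(card_of S, card_of T) \<in> ordLeq"
  show "\<not> reaping_family S"
  proof (cases "\<forall>s\<in>S. infinite s")
    case infinite: True
    define A where "A = (\<lambda>s. d ` s) ` S"
    have "\<forall>a\<in>A. a \<subseteq> K \<and> countable a \<and> infinite a \<and> cofinal_in r K a"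
      unfolding A_def using infinite chain_in cofinal_chain_image inj_chain
      by (auto simp: finite_image_iff inj_on_subset)
    moreover have "(card_of A, card_of T) \<in> ordLeq"
      unfolding A_def using card_of_image card_S ordLeq_transitive by blast
    ultimately obtain E where "\<forall>a\<in>A. infinite (a \<inter> E) \<and> infinite (a - E)"
      using assms unfolding splits_small_cofinal_def by blast
    then have "\<forall>s\<in>S. infinite (s \<inter> d -` E) \<and> infinite (s - d -` E)"
      using split_image_imp_split_vimage unfolding A_def by blast
    then show ?thesis using infinite not_reaping_family_iff_split by blast
  next
    case False
    then show ?thesis unfolding reaping_family_def by blast
  qed
qed

end

lemma countable_cofinal_imp_cofinal_omega_chain:
  assumes linear: "linear_order_on K r" and "K \<noteq> {}"
    and no_greatest: "\<And>x. x \<in> K \<Longrightarrow> \<exists>y\<in>K. x \<noteq> y \<and> (x, y) \<in> r"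
    and "countable c" and c: "cofinal_in r K c"
  shows "\<exists>d. cofinal_omega_chain K r d"
proof -
  have partial: "partial_order_on K r" using linear unfolding linear_order_on_def by blast
  have refl: "\<And>x. x \<in> K \<Longrightarrow> (x, x) \<in> r" and "trans r"
    and total: "\<And>x y. x \<in> K \<Longrightarrow> y \<in> K \<Longrightarrow> x \<noteq> y \<Longrightarrow> (x, y) \<in> r \<or> (y, x) \<in> r"
    using linear unfolding linear_order_on_def partial_order_on_def preorder_on_def
      refl_on_def total_on_def by blast+
  have "c \<noteq> {}" using c \<open>K \<noteq> {}\<close> unfolding cofinal_in_def by blast
  define e where "e = from_nat_into c"
  have e_in: "e n \<in> K" for n
    using from_nat_into[OF \<open>c \<noteq> {}\<close>] c unfolding e_def cofinal_in_def by blast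
  obtain up where up: "\<And>x. x \<in> K \<Longrightarrow> up x \<in> K \<and> x \<noteq> up x \<and> (x, up x) \<in> r"
    using bchoice[of K "\<lambda>x y. y \<in> K \<and> x \<noteq> y \<and> (x, y) \<in> r"] no_greatest by blast
  define sup where "sup x y = (if (x, y) \<in> r then y else x)" for x y
  have sup: "sup x y \<in> K \<and> (x, sup x y) \<in> r \<and> (y, sup x y) \<in> r" if "x \<in> K" "y \<in> K" for x y
    using that refl total unfolding sup_def by (cases "x = y") auto
  define d where "d = rec_nat (e 0) (\<lambda>n dn. up (sup dn (e (Suc n))))"
  have d_Suc: "d (Suc n) = up (sup (d n) (e (Suc n)))" for n unfolding d_def by simp
  have d_in: "d n \<in> K \<and> (e n, d n) \<in> r" for n
  proof (induction n)
    case 0 show ?case using e_in refl unfolding d_def by simp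
  next
    case (Suc n) then show ?case
      using sup[of "d n" "e (Suc n)"] up e_in \<open>trans r\<close> unfolding d_Suc by (meson transD)
  qed
  have step: "(d n, d (Suc n)) \<in> r \<and> d n \<noteq> d (Suc n)" for n
  proof -
    let ?s = "sup (d n) (e (Suc n))"
    have "(d n, ?s) \<in> r" "(?s, d (Suc n)) \<in> r" "?s \<noteq> d (Suc n)"
      using sup d_in e_in up unfolding d_Suc by blast+
    moreover have "d n \<noteq> d (Suc n)"
    proof
      assume "d n = d (Suc n)"
      then have "?s = d (Suc n)"
        using calculation partial unfolding partial_order_on_def antisym_def by auto
      then show False using \<open>?s \<noteq> d (Suc n)\<close> by blast
    qed
    ultimately show ?thesis using \<open>trans r\<close> by (meson transD)
  qed
  have "cofinal_omega_chain K r d"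
  proof
    show "n < m \<Longrightarrow> (d n, d m) \<in> r \<and> d n \<noteq> d m" for n m
      using partial_order_on_chain_strict[of K r d] partial step by blast
  next
    fix x assume "x \<in> K"
    then obtain y where "y \<in> c" "(x, y) \<in> r" using c unfolding cofinal_in_def by blast
    moreover obtain n where "e n = y"
      using \<open>y \<in> c\<close> from_nat_into_surj[OF \<open>countable c\<close>] unfolding e_def by blast
    ultimately show "\<exists>n. (x, d n) \<in> r" using d_in \<open>trans r\<close> by (meson transD)
  qed (rule partial)
  then show ?thesis by blast
qed

lemma singular_cof_omega_imp_cofinal_omega_chain:
  assumes "singular_cof_omega K r"
  shows "\<exists>d. cofinal_omega_chain K r d"
proof -
  obtain c where card: "card_order_on K r" and "uncountable K" "countable c" "cofinal_in r K c"
    using assms unfolding singular_cof_omega_def by blast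
  have linear: "linear_order_on K r"
    using card_order_on_well_order_on[OF card] unfolding well_order_on_def by blast
  have "infinite K" using \<open>uncountable K\<close> countable_finite by blast
  then have "K \<noteq> {}" by auto
  have "K = Field r" and "Card_order r" using card_order_on_Card_order[OF card] by blast+
  then have no_greatest: "\<exists>y\<in>K. x \<noteq> y \<and> (x, y) \<in> r" if "x \<in> K" for x
    using infinite_Card_order_limit[of r x] \<open>infinite K\<close> that by simp
  show ?thesis
    using countable_cofinal_imp_cofinal_omega_chain[OF linear \<open>K \<noteq> {}\<close> no_greatest]
      \<open>countable c\<close> \<open>cofinal_in r K c\<close> by blast
qed

lemma below_reaping_iff_splits_small_cofinal:
  assumes "singular_cof_omega K r"
  shows "below_reaping T \<longleftrightarrow> splits_small_cofinal T K r"
proof -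
  obtain d where "cofinal_omega_chain K r d"
    using singular_cof_omega_imp_cofinal_omega_chain[OF assms] by blast
  then interpret cofinal_omega_chain K r d .
  show ?thesis
    using splits_small_cofinal_if_below_reaping below_reaping_if_splits_small_cofinal by blast
qed

theorem mainTheorem16:
  fixes T :: "'t set"
  assumes "infinite T"
    and "\<exists>(K :: 'k set) r. singular_cof_omega K r"
  shows "(below_reaping T \<longleftrightarrow>
            (\<forall>(K :: 'k set) r. singular_cof_omega K r \<longrightarrow> splits_small_cofinal T K r))
       \<and> (below_reaping T \<longleftrightarrow>
            (\<exists>(K :: 'k set) r. singular_cof_omega K r \<and> splits_small_cofinal T K r))"
proof -
  obtain K :: "'k set" and r where "singular_cof_omega K r" using assms(2) by blast
  then show ?thesis using below_reaping_iff_splits_small_cofinal[where T = T] by blast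
qed

end
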